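(* Let $b>0$ and let $x_0,x_\infty$ be as in the context. Then $x_\infty<x_0$.
   Context: Constants: $a\in\mathbb{R}$, $b>0$, $\sigma>0$, $\rho>0$, $c>0$. For $\beta<0$, let $D_\beta(x)=\frac{e^{-x^2/4}}{\Gamma(-\beta)}\int_0^\infty t^{-\beta-1}e^{-t^2/2-xt}\,dt$, and $\psi(x)=e^{\frac{(bx-a)^2}{2\sigma^2 b}}D_{-\rho/b}\big(-\frac{bx-a}{\sigma b}\sqrt{2b}\big)$, the positive strictly increasing fundamental solution of $\frac12\sigma^2u''+(a-bx)u'-\rho u=0$. Let $x_0$ be the unique solution on $(c,\infty)$ of $(x-c)\psi'(x)-\psi(x)=0$ and $x_\infty$ the unique solution on $(c,\infty)$ of $(x-c)\psi''(x)-\psi'(x)=0$ (these exist and are unique). *)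

theory Defs
  imports "HOL-Analysis.Analysis"
begin

text \<open>Parabolic cylinder function D_beta for beta < 0 (integral representation).\<close>
definition parD :: "real \<Rightarrow> real \<Rightarrow> real" where
  "parD \<beta> x = exp (- (x\<^sup>2) / 4) / Gamma (- \<beta>) *
      integral {0<..} (\<lambda>t. t powr (- \<beta> - 1) * exp (- (t\<^sup>2) / 2 - x * t))"

text \<open>The increasing fundamental solution psi.\<close>
definition psi :: "real \<Rightarrow> real \<Rightarrow> real \<Rightarrow> real \<Rightarrow> real \<Rightarrow> real" where
  "psi a b \<sigma> \<rho> x = exp ((b * x - a)\<^sup>2 / (2 * \<sigma>\<^sup>2 * b)) *
      parD (- \<rho> / b) (- ((b * x - a) / (\<sigma> * b)) * sqrt (2 * b))"

end

theory Submission
  imports Defs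
begin

text \<open>With \<open>p = \<rho>/b\<close> and \<open>K = sqrt (2b)/\<sigma>\<close>, the integral defining \<open>D\<^sub>\<beta>\<close> turns \<open>\<psi>\<close> into
  \<open>\<psi>(x) = M\<^sub>0(K (a/b - x)) / \<Gamma>(p)\<close>, where
  \<open>M\<^sub>n(z) = pcf_moment p n z = \<integral>\<^sub>0\<^sup>\<infinity> t\<^sup>n t\<^bsup>p-1\<^esup> e\<^bsup>-t\<^sup>2/2 - z t\<^esup> dt\<close>.
  Differentiating under the integral sign gives \<open>\<psi>\<^bsup>(n)\<^esup>(x) = K\<^sup>n M\<^sub>n(K (a/b - x)) / \<Gamma>(p) > 0\<close>,
  and the Cauchy--Schwarz inequality \<open>M\<^sub>1\<^sup>2 < M\<^sub>0 M\<^sub>2\<close> gives \<open>\<psi>'\<^sup>2 < \<psi> \<psi>''\<close>.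
  Now \<open>H(y) = (y - c) \<psi>''(y) - \<psi>'(y)\<close> is negative at \<open>c\<close>, while the defining relation
  \<open>(x\<^sub>0 - c) \<psi>'(x\<^sub>0) = \<psi>(x\<^sub>0)\<close> gives \<open>\<psi>'(x\<^sub>0) H(x\<^sub>0) = \<psi> \<psi>'' - \<psi>'\<^sup>2 > 0\<close> at \<open>x\<^sub>0\<close>.
  So \<open>H\<close> vanishes somewhere in \<open>(c, x\<^sub>0)\<close>, and by uniqueness this zero is \<open>x\<^sub>\<infinity>\<close>.\<close>

lemma abs_exp_minus_one_minus_le:
  fixes u :: real
  shows "\<bar>exp u - 1 - u\<bar> \<le> u\<^sup>2 * exp \<bar>u\<bar>"
proof -
  obtain s where s: "\<bar>s\<bar> \<le> \<bar>u\<bar>" "exp u = (\<Sum>m<2. u ^ m / fact m) + exp s / fact 2 * u ^ 2"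
    using Maclaurin_exp_le[of u 2] by blast
  then have "\<bar>exp u - 1 - u\<bar> = u\<^sup>2 * (exp s / 2)"
    by (simp add: eval_nat_numeral)
  also have "\<dots> \<le> u\<^sup>2 * exp \<bar>u\<bar>"
  proof -
    have "exp s \<le> exp \<bar>u\<bar>"
      using s(1) by simp
    then have "exp s / 2 \<le> exp \<bar>u\<bar>"
      using exp_gt_zero[of s] by linarith
    then show ?thesis
      by (rule mult_left_mono) simp
  qed
  finally show ?thesis .
qed

lemma Gamma_kernel_integrable_real:
  fixes s :: real
  assumes "s > 0"
  shows "(\<lambda>t. t powr (s - 1) * exp (- t)) integrable_on {0<..}"
proof -
  have "{0..} = insert (0::real) {0<..}"
    by auto
  then have "(\<lambda>t. t powr (s - 1) / exp t) integrable_on insert 0 {0<..}"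
    using Gamma_integral_real[OF assms] by auto
  then show ?thesis
    by (simp add: integrable_on_insert_iff exp_minus divide_inverse)
qed

lemma integral_pos_of_continuous_nonneg:
  fixes f :: "real \<Rightarrow> real"
  assumes "open S" and "continuous_on S f" and "f integrable_on S"
    and "\<And>t. t \<in> S \<Longrightarrow> f t \<ge> 0" and "t0 \<in> S" and "f t0 > 0"
  shows "integral S f > 0"
proof -
  have "isCont f t0"
    using assms(1,2,5) continuous_on_eq_continuous_at by blast
  then obtain d where "d > 0" and d: "\<And>t. dist t t0 < d \<Longrightarrow> dist (f t) (f t0) < f t0 / 2"
    using \<open>f t0 > 0\<close> unfolding continuous_at_eps_delta by (meson half_gt_zero)
  obtain r where "r > 0" and r: "ball t0 r \<subseteq> S"
    using assms(1,5) openE by blast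
  define e where "e = min d r / 2"
  have "e > 0" and sub: "{t0 - e..t0 + e} \<subseteq> S"
    using \<open>d > 0\<close> \<open>r > 0\<close> r by (auto simp: e_def dist_real_def subset_iff)
  have int: "f integrable_on {t0 - e..t0 + e}"
    using continuous_on_subset[OF assms(2) sub] by (rule integrable_continuous_interval)
  have "f t \<ge> f t0 / 2" if "t \<in> {t0 - e..t0 + e}" for t
  proof -
    have "dist t t0 < d"
      using that \<open>d > 0\<close> \<open>r > 0\<close> by (auto simp: e_def dist_real_def)
    then have "\<bar>f t - f t0\<bar> < f t0 / 2"
      using d[of t] by (simp add: dist_real_def)
    then show ?thesis
      unfolding abs_less_iff by linarith
  qed
  then have "integral {t0 - e..t0 + e} (\<lambda>_. f t0 / 2) \<le> integral {t0 - e..t0 + e} f"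
    by (intro integral_le int) auto
  also have "\<dots> \<le> integral S f"
    using sub int assms(3,4) by (intro integral_subset_le) auto
  finally have "e * f t0 \<le> integral S f"
    using \<open>e > 0\<close> by (simp add: integral_const_real)
  moreover have "e * f t0 > 0"
    using \<open>e > 0\<close> \<open>f t0 > 0\<close> by simp
  ultimately show ?thesis
    by linarith
qed

lemma has_real_derivative_if_quadratic_remainder:
  fixes f :: "real \<Rightarrow> real"
  assumes "r > 0" and "\<And>h. \<bar>h\<bar> \<le> r \<Longrightarrow> \<bar>f (z + h) - f z - h * D\<bar> \<le> C * h\<^sup>2"
  shows "(f has_real_derivative D) (at z)"
proof -
  have "\<forall>\<^sub>F h in at 0. norm ((f (z + h) - f z) / h - D) \<le> C * \<bar>h\<bar>"
    unfolding eventually_at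
  proof (intro exI[of _ r] conjI ballI impI)
    fix h :: real
    assume "h \<in> UNIV" and h: "h \<noteq> 0 \<and> dist h 0 < r"
    then have "(f (z + h) - f z) / h - D = (f (z + h) - f z - h * D) / h"
      by (simp add: field_simps)
    then have "norm ((f (z + h) - f z) / h - D) = \<bar>f (z + h) - f z - h * D\<bar> / \<bar>h\<bar>"
      by simp
    also have "\<dots> \<le> C * h\<^sup>2 / \<bar>h\<bar>"
      using assms(2)[of h] h by (simp add: divide_right_mono)
    also have "\<dots> = C * \<bar>h\<bar>"
      using h by (simp add: power2_eq_square field_simps)
    finally show "norm ((f (z + h) - f z) / h - D) \<le> C * \<bar>h\<bar>" .
  qed (use \<open>r > 0\<close> in simp)
  moreover have "((\<lambda>h. C * \<bar>h\<bar>) \<longlongrightarrow> 0) (at 0)"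
    by (auto intro!: tendsto_eq_intros)
  ultimately have "((\<lambda>h. (f (z + h) - f z) / h - D) \<longlongrightarrow> 0) (at 0)"
    by (rule Lim_null_comparison)
  then show ?thesis
    unfolding DERIV_def by (rule LIM_zero_cancel)
qed

lemma root_between_of_tangent_point:
  fixes f f' f'' :: "real \<Rightarrow> real"
  assumes "c < x0" and "continuous_on {c..x0} f'" and "continuous_on {c..x0} f''"
    and "f' c > 0" and "f' x0 > 0" and "(f' x0)\<^sup>2 < f x0 * f'' x0"
    and "(x0 - c) * f' x0 - f x0 = 0"
  shows "\<exists>y. c < y \<and> y < x0 \<and> (y - c) * f'' y - f' y = 0"
proof -
  define H where "H y = (y - c) * f'' y - f' y" for y
  have "H c < 0"
    using assms(4) by (simp add: H_def)
  have "H x0 * f' x0 = ((x0 - c) * f' x0) * f'' x0 - (f' x0)\<^sup>2"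
    by (simp add: H_def power2_eq_square algebra_simps)
  also have "\<dots> = f x0 * f'' x0 - (f' x0)\<^sup>2"
    using assms(7) by simp
  finally have "H x0 * f' x0 = f x0 * f'' x0 - (f' x0)\<^sup>2" .
  then have "H x0 * f' x0 > 0"
    using assms(6) by simp
  then have "H x0 > 0"
    using assms(5) by (simp add: zero_less_mult_iff)
  have "continuous_on {c..x0} H"
    unfolding H_def using assms(2,3) by (intro continuous_intros)
  then obtain y where "c \<le> y" "y \<le> x0" "H y = 0"
    using IVT'[of H c 0 x0] \<open>H c < 0\<close> \<open>H x0 > 0\<close> assms(1) by force
  moreover have "y \<noteq> c" "y \<noteq> x0"
    using \<open>H c < 0\<close> \<open>H x0 > 0\<close> \<open>H y = 0\<close> by auto
  ultimately have "c < y" "y < x0"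
    by auto
  with \<open>H y = 0\<close> show ?thesis
    unfolding H_def by blast
qed

definition pcf_kernel :: "real \<Rightarrow> nat \<Rightarrow> real \<Rightarrow> real \<Rightarrow> real" where
  "pcf_kernel p n z t = t ^ n * t powr (p - 1) * exp (- (t\<^sup>2) / 2 - z * t)"

definition pcf_moment :: "real \<Rightarrow> nat \<Rightarrow> real \<Rightarrow> real" where
  "pcf_moment p n z = integral {0<..} (pcf_kernel p n z)"

lemma continuous_on_pcf_kernel: "continuous_on {0<..} (pcf_kernel p n z)"
  unfolding pcf_kernel_def by (intro continuous_intros) auto

lemma pcf_kernel_pos: "t > 0 \<Longrightarrow> pcf_kernel p n z t > 0"
  unfolding pcf_kernel_def by simp

lemma pcf_kernel_Suc: "pcf_kernel p (Suc n) z t = t * pcf_kernel p n z t"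
  unfolding pcf_kernel_def by (simp add: algebra_simps)

lemma pcf_kernel_shift: "pcf_kernel p n (z + h) t = exp (- h * t) * pcf_kernel p n z t"
  unfolding pcf_kernel_def by (simp add: exp_add[symmetric] algebra_simps)

lemma pcf_kernel_add2: "pcf_kernel p (n + 2) (z - 1) t = t\<^sup>2 * exp t * pcf_kernel p n z t"
proof -
  have "exp (- (t\<^sup>2) / 2 - (z - 1) * t) = exp t * exp (- (t\<^sup>2) / 2 - z * t)"
    by (simp add: exp_add[symmetric] algebra_simps)
  then show ?thesis
    by (simp add: pcf_kernel_def power_add power2_eq_square algebra_simps)
qed

lemma pcf_kernel_integrable:
  assumes "p > 0"
  shows "pcf_kernel p n z integrable_on {0<..}"
proof -
  let ?g = "\<lambda>t. exp ((1 - z)\<^sup>2 / 2) * (t powr (p + real n - 1) * exp (- t))"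
  have "(\<lambda>t. t powr (p + real n - 1) * exp (- t)) integrable_on {0<..}"
    using assms by (intro Gamma_kernel_integrable_real) simp
  then have "?g integrable_on {0<..}"
    using integrable_on_cmult_left by simp
  then have "pcf_kernel p n z absolutely_integrable_on {0<..}"
  proof (rule measurable_bounded_by_integrable_imp_absolutely_integrable[rotated 2])
    show "pcf_kernel p n z \<in> borel_measurable (lebesgue_on {0<..})"
      by (rule continuous_imp_measurable_on_sets_lebesgue[OF continuous_on_pcf_kernel]) auto
    show "{0::real<..} \<in> sets lebesgue"
      by (intro sets_completionI_sets) (simp add: borel_open)
    fix t :: real
    assume "t \<in> {0<..}"
    then have powr_eq: "t ^ n * t powr (p - 1) = t powr (p + real n - 1)"
      by (simp add: powr_add powr_realpow[symmetric] powr_diff)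
    have square: "- (t\<^sup>2) / 2 - z * t \<le> (1 - z)\<^sup>2 / 2 + - t"
      using zero_le_power2[of "t - (1 - z)"] by (simp add: power2_eq_square algebra_simps)
    have "norm (pcf_kernel p n z t) = t powr (p + real n - 1) * exp (- (t\<^sup>2) / 2 - z * t)"
      using powr_eq by (simp add: pcf_kernel_def)
    also have "\<dots> \<le> t powr (p + real n - 1) * exp ((1 - z)\<^sup>2 / 2 + - t)"
      using square by (intro mult_left_mono) auto
    also have "\<dots> = ?g t"
      unfolding exp_add by simp
    finally show "norm (pcf_kernel p n z t) \<le> ?g t" .
  qed
  then show ?thesis
    by (simp add: absolutely_integrable_on_def)
qed

lemma has_integral_pcf_moment:
  "p > 0 \<Longrightarrow> (pcf_kernel p n z has_integral pcf_moment p n z) {0<..}"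
  unfolding pcf_moment_def using pcf_kernel_integrable by (simp add: has_integral_integral)

lemma pcf_moment_pos: "p > 0 \<Longrightarrow> pcf_moment p n z > 0"
  unfolding pcf_moment_def
  by (rule integral_pos_of_continuous_nonneg[of _ _ 1])
    (auto intro: continuous_on_pcf_kernel pcf_kernel_integrable less_imp_le pcf_kernel_pos)

lemma pcf_moment_log_convex:
  assumes "p > 0"
  shows "(pcf_moment p 1 z)\<^sup>2 < pcf_moment p 0 z * pcf_moment p 2 z"
proof -
  \<comment> \<open>the variance of the density \<open>pcf_kernel p 0 z\<close> about its mean \<open>l\<close> is positive\<close>
  define l where "l = pcf_moment p 1 z / pcf_moment p 0 z"
  let ?g = "\<lambda>t. (t - l)\<^sup>2 * pcf_kernel p 0 z t"
  have "((\<lambda>t. pcf_kernel p 2 z t - 2 * l * pcf_kernel p 1 z t + l\<^sup>2 * pcf_kernel p 0 z t) has_integral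
          (pcf_moment p 2 z - 2 * l * pcf_moment p 1 z + l\<^sup>2 * pcf_moment p 0 z)) {0<..}"
    using assms by (intro has_integral_add has_integral_diff has_integral_mult_right has_integral_pcf_moment)
  moreover have "pcf_kernel p 2 z t - 2 * l * pcf_kernel p 1 z t + l\<^sup>2 * pcf_kernel p 0 z t = ?g t" for t
    unfolding pcf_kernel_def by (simp add: power2_eq_square algebra_simps)
  ultimately have g: "(?g has_integral (pcf_moment p 2 z - 2 * l * pcf_moment p 1 z + l\<^sup>2 * pcf_moment p 0 z)) {0<..}"
    by simp
  have "integral {0<..} ?g > 0"
  proof (rule integral_pos_of_continuous_nonneg[of _ _ "\<bar>l\<bar> + 1"])
    show "?g integrable_on {0<..}"
      using g by blast
    show "?g (\<bar>l\<bar> + 1) > 0"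
      using pcf_kernel_pos[of "\<bar>l\<bar> + 1" p 0 z] by (auto simp: abs_if)
  qed (auto intro!: continuous_intros continuous_on_pcf_kernel mult_nonneg_nonneg
      less_imp_le[OF pcf_kernel_pos])
  then have "pcf_moment p 2 z - 2 * l * pcf_moment p 1 z + l\<^sup>2 * pcf_moment p 0 z > 0"
    using g integral_unique by metis
  then show ?thesis
    using pcf_moment_pos[OF assms, of 0 z] by (simp add: l_def power2_eq_square field_simps)
qed

lemma pcf_moment_remainder_bound:
  assumes "p > 0" and "\<bar>h\<bar> \<le> 1"
  shows "\<bar>pcf_moment p n (z + h) - pcf_moment p n z - h * - pcf_moment p (Suc n) z\<bar>
           \<le> pcf_moment p (n + 2) (z - 1) * h\<^sup>2"
proof -
  let ?r = "\<lambda>t. pcf_kernel p n (z + h) t - pcf_kernel p n z t - h * - pcf_kernel p (Suc n) z t"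
  have r: "(?r has_integral pcf_moment p n (z + h) - pcf_moment p n z - h * - pcf_moment p (Suc n) z) {0<..}"
    using assms(1) by (intro has_integral_diff has_integral_mult_right has_integral_neg has_integral_pcf_moment)
  have g: "((\<lambda>t. h\<^sup>2 * pcf_kernel p (n + 2) (z - 1) t) has_integral h\<^sup>2 * pcf_moment p (n + 2) (z - 1)) {0<..}"
    using assms(1) by (intro has_integral_mult_right has_integral_pcf_moment)
  have "norm (?r t) \<le> h\<^sup>2 * pcf_kernel p (n + 2) (z - 1) t" if "t \<in> {0<..}" for t
  proof -
    have k: "pcf_kernel p n z t \<ge> 0"
      using that pcf_kernel_pos by (simp add: less_imp_le)
    have "?r t = pcf_kernel p n z t * (exp (- h * t) - 1 - (- h * t))"
      unfolding pcf_kernel_shift pcf_kernel_Suc by (simp add: algebra_simps)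
    then have "norm (?r t) = pcf_kernel p n z t * \<bar>exp (- h * t) - 1 - (- h * t)\<bar>"
      using k by (simp add: abs_mult)
    also have "\<dots> \<le> pcf_kernel p n z t * ((- h * t)\<^sup>2 * exp \<bar>- h * t\<bar>)"
      using k by (intro mult_left_mono abs_exp_minus_one_minus_le)
    also have "\<dots> \<le> pcf_kernel p n z t * ((- h * t)\<^sup>2 * exp t)"
      using k that assms(2) by (intro mult_left_mono) (auto simp: abs_mult mult_left_le_one_le)
    also have "\<dots> = h\<^sup>2 * pcf_kernel p (n + 2) (z - 1) t"
      unfolding pcf_kernel_add2 by (simp add: power_mult_distrib)
    finally show ?thesis .
  qed
  then have "norm (integral {0<..} ?r) \<le> integral {0<..} (\<lambda>t. h\<^sup>2 * pcf_kernel p (n + 2) (z - 1) t)"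
    using r g by (intro integral_norm_bound_integral) auto
  then show ?thesis
    unfolding integral_unique[OF r] integral_unique[OF g] by (simp add: mult.commute)
qed

lemma has_real_derivative_pcf_moment:
  "p > 0 \<Longrightarrow> (pcf_moment p n has_real_derivative - pcf_moment p (Suc n) z) (at z)"
  by (rule has_real_derivative_if_quadratic_remainder[OF zero_less_one pcf_moment_remainder_bound])

definition scaled_pcf_moment :: "real \<Rightarrow> real \<Rightarrow> real \<Rightarrow> nat \<Rightarrow> real \<Rightarrow> real" where
  "scaled_pcf_moment p K m n x = K ^ n * pcf_moment p n (K * (m - x))"

lemma has_real_derivative_scaled_pcf_moment:
  assumes "p > 0"
  shows "(scaled_pcf_moment p K m n has_real_derivative scaled_pcf_moment p K m (Suc n) x) (at x)"
proof -
  have "((\<lambda>x. K * (m - x)) has_real_derivative - K) (at x)"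
    by (auto intro!: derivative_eq_intros)
  from DERIV_chain2[OF has_real_derivative_pcf_moment[OF assms] this]
  have "((\<lambda>x. K ^ n * pcf_moment p n (K * (m - x))) has_real_derivative
          K ^ n * (- pcf_moment p (Suc n) (K * (m - x)) * - K)) (at x)"
    by (rule DERIV_cmult)
  then show ?thesis
    unfolding scaled_pcf_moment_def[abs_def] by (simp add: ac_simps)
qed

lemma psi_eq_scaled_pcf_moment:
  assumes "b > 0" and "\<sigma> > 0"
  shows "psi a b \<sigma> \<rho> x = scaled_pcf_moment (\<rho> / b) (sqrt (2 * b) / \<sigma>) (a / b) 0 x / Gamma (\<rho> / b)"
proof -
  define z where "z = - ((b * x - a) / (\<sigma> * b)) * sqrt (2 * b)"
  have "(sqrt (2 * b))\<^sup>2 = 2 * b"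
    using assms by simp
  then have exponent: "(b * x - a)\<^sup>2 / (2 * \<sigma>\<^sup>2 * b) = z\<^sup>2 / 4"
    using assms unfolding z_def power_mult_distrib by (simp add: power2_eq_square field_simps)
  have kernel: "(\<lambda>t. t powr (- (- \<rho> / b) - 1) * exp (- (t\<^sup>2) / 2 - z * t)) = pcf_kernel (\<rho> / b) 0 z"
    by (simp add: pcf_kernel_def fun_eq_iff)
  have "psi a b \<sigma> \<rho> x = exp (z\<^sup>2 / 4) * (exp (- (z\<^sup>2) / 4) / Gamma (\<rho> / b) * pcf_moment (\<rho> / b) 0 z)"
    unfolding psi_def parD_def exponent z_def[symmetric] kernel pcf_moment_def by simp
  also have "\<dots> = pcf_moment (\<rho> / b) 0 z / Gamma (\<rho> / b)"
    by (simp add: exp_minus field_simps)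
  also have "z = sqrt (2 * b) / \<sigma> * (a / b - x)"
    using assms by (simp add: z_def field_simps)
  finally show ?thesis
    by (simp add: scaled_pcf_moment_def)
qed

lemma higher_deriv_psi:
  assumes "b > 0" and "\<sigma> > 0" and "\<rho> > 0"
  shows "(deriv ^^ n) (psi a b \<sigma> \<rho>) = (\<lambda>x. scaled_pcf_moment (\<rho> / b) (sqrt (2 * b) / \<sigma>) (a / b) n x / Gamma (\<rho> / b))"
proof (induction n)
  case 0
  then show ?case
    using psi_eq_scaled_pcf_moment[OF assms(1,2)] by auto
next
  case (Suc n)
  have "\<rho> / b > 0"
    using assms by simp
  then show ?case
    unfolding funpow.simps comp_def Suc
    by (intro ext DERIV_imp_deriv DERIV_cdivide has_real_derivative_scaled_pcf_moment)
qed

lemma has_real_derivative_higher_deriv_psi: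
  assumes "b > 0" and "\<sigma> > 0" and "\<rho> > 0"
  shows "((deriv ^^ n) (psi a b \<sigma> \<rho>) has_real_derivative (deriv ^^ Suc n) (psi a b \<sigma> \<rho>) x) (at x)"
  using assms unfolding higher_deriv_psi[OF assms]
  by (intro DERIV_cdivide has_real_derivative_scaled_pcf_moment) simp

lemma higher_deriv_psi_pos:
  assumes "b > 0" and "\<sigma> > 0" and "\<rho> > 0"
  shows "(deriv ^^ n) (psi a b \<sigma> \<rho>) x > 0"
  using assms unfolding higher_deriv_psi[OF assms] scaled_pcf_moment_def
  by (simp add: pcf_moment_pos Gamma_real_pos)

lemma deriv_psi_sq_less:
  assumes "b > 0" and "\<sigma> > 0" and "\<rho> > 0"
  shows "(deriv (psi a b \<sigma> \<rho>) x)\<^sup>2 < psi a b \<sigma> \<rho> x * deriv (deriv (psi a b \<sigma> \<rho>)) x"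
proof -
  define K where "K = sqrt (2 * b) / \<sigma>"
  define G where "G = Gamma (\<rho> / b)"
  define M where "M n = pcf_moment (\<rho> / b) n (K * (a / b - x))" for n
  have "K > 0" "G > 0" "\<rho> / b > 0"
    using assms by (simp_all add: K_def G_def Gamma_real_pos)
  then have "(K / G)\<^sup>2 > 0"
    by simp
  have D: "(deriv ^^ n) (psi a b \<sigma> \<rho>) x = K ^ n * M n / G" for n
    by (simp add: higher_deriv_psi[OF assms] scaled_pcf_moment_def K_def G_def M_def)
  have "(deriv (psi a b \<sigma> \<rho>) x)\<^sup>2 = (K / G)\<^sup>2 * (M 1)\<^sup>2"
    using D[of 1] by (simp add: power_mult_distrib power_divide)
  also have "\<dots> < (K / G)\<^sup>2 * (M 0 * M 2)"
    using pcf_moment_log_convex[OF \<open>\<rho> / b > 0\<close>] \<open>(K / G)\<^sup>2 > 0\<close>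
    by (intro mult_strict_left_mono) (simp_all add: M_def)
  also have "\<dots> = psi a b \<sigma> \<rho> x * deriv (deriv (psi a b \<sigma> \<rho>)) x"
    using D[of 0] D[of 2] by (simp add: numeral_2_eq_2 power2_eq_square)
  finally show ?thesis .
qed

theorem lemma4p5:
  fixes a b \<sigma> \<rho> c x0 xinf :: real
  assumes "b > 0" and "\<sigma> > 0" and "\<rho> > 0" and "c > 0"
    and "x0 > c"
    and "(x0 - c) * deriv (psi a b \<sigma> \<rho>) x0 - psi a b \<sigma> \<rho> x0 = 0"
    and "\<forall>y>c. (y - c) * deriv (psi a b \<sigma> \<rho>) y - psi a b \<sigma> \<rho> y = 0 \<longrightarrow> y = x0"
    and "xinf > c"
    and "(xinf - c) * deriv (deriv (psi a b \<sigma> \<rho>)) xinf - deriv (psi a b \<sigma> \<rho>) xinf = 0"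
    and "\<forall>y>c. (y - c) * deriv (deriv (psi a b \<sigma> \<rho>)) y - deriv (psi a b \<sigma> \<rho>) y = 0 \<longrightarrow> y = xinf"
  shows "xinf < x0"
proof -
  let ?f = "psi a b \<sigma> \<rho>"
  have cont: "continuous_on {c..x0} ((deriv ^^ n) ?f)" for n
    using has_real_derivative_higher_deriv_psi[OF assms(1-3)]
    by (meson DERIV_isCont continuous_at_imp_continuous_on)
  have "continuous_on {c..x0} (deriv ?f)" "continuous_on {c..x0} (deriv (deriv ?f))"
    using cont[of 1] cont[of 2] by (simp_all add: numeral_2_eq_2)
  moreover have "deriv ?f x > 0" for x
    using higher_deriv_psi_pos[OF assms(1-3), of 1] by simp
  ultimately obtain y where "c < y" "y < x0"
    and "(y - c) * deriv (deriv ?f) y - deriv ?f y = 0"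
    using root_between_of_tangent_point[where f = ?f and f' = "deriv ?f" and f'' = "deriv (deriv ?f)",
      OF assms(5) _ _ _ _ deriv_psi_sq_less[OF assms(1-3)] assms(6)]
    by blast
  then show ?thesis
    using assms(10) by auto
qed

end
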